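(* Let $X$ be a regular space and $Y$ any space. Then $nw(X)\leq nw(Q_{P}(X,Y))$.
   Context: A function $f\colon X\to Y$ between topological spaces is quasi-continuous at $x\in X$ if for every open $U\ni x$ and every open $V\ni f(x)$ there is a non-empty open $G\subseteq U$ with $f(G)\subseteq V$; $f$ is quasi-continuous if it is so at every point. $Q_{P}(X,Y)$ is the set of quasi-continuous functions $X\to Y$ with the topology of point-wise convergence, whose base consists of the sets $[x_1,\dots,x_n;U_1,\dots,U_n]=\{f: f(x_i)\in U_i,\ 1\le i\le n\}$ with $x_i\in X$, $U_i$ open in $Y$. For a space $Z$, $nw(Z)=\aleph_0+\min\{|\mathcal{N}|:\mathcal{N}\text{ a network of }Z\}$, where a network is a family $\mathcal{N}$ of subsets of $Z$ such that for every $z\in Z$ and open $U\ni z$ there is $N\in\mathcal{N}$ with $z\in N\subseteq U$. *)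

theory Defs
  imports "HOL-Analysis.Analysis"
begin

definition quasi_continuous_at :: "'a topology \<Rightarrow> 'b topology \<Rightarrow> ('a \<Rightarrow> 'b) \<Rightarrow> 'a \<Rightarrow> bool" where
  "quasi_continuous_at X Y f x \<longleftrightarrow>
     (\<forall>U V. openin X U \<and> x \<in> U \<and> openin Y V \<and> f x \<in> V \<longrightarrow>
        (\<exists>G. openin X G \<and> G \<noteq> {} \<and> G \<subseteq> U \<and> f ` G \<subseteq> V))"

definition quasi_continuous :: "'a topology \<Rightarrow> 'b topology \<Rightarrow> ('a \<Rightarrow> 'b) \<Rightarrow> bool" where
  "quasi_continuous X Y f \<longleftrightarrow>
     f ` topspace X \<subseteq> topspace Y \<and> (\<forall>x \<in> topspace X. quasi_continuous_at X Y f x)"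

text \<open>Q_P(X,Y): quasi-continuous functions (as extensional functions on topspace X) with the
  topology of pointwise convergence, i.e. the subspace topology of the product topology.\<close>
definition QP :: "'a topology \<Rightarrow> 'b topology \<Rightarrow> ('a \<Rightarrow> 'b) topology" where
  "QP X Y = subtopology (product_topology (\<lambda>_. Y) (topspace X))
              {f \<in> extensional (topspace X). quasi_continuous X Y f}"

definition network :: "'a topology \<Rightarrow> 'a set set \<Rightarrow> bool" where
  "network Z \<N> \<longleftrightarrow> \<N> \<subseteq> Pow (topspace Z) \<and>
     (\<forall>z U. openin Z U \<and> z \<in> U \<longrightarrow> (\<exists>N \<in> \<N>. z \<in> N \<and> N \<subseteq> U))"

end

theory Submission
  imports Defs
begin

text \<open>
  Let \<open>V\<close> be an open set of \<open>Y\<close> containing \<open>y\<^sub>0\<close> but not \<open>y\<^sub>1\<close>. Every network \<open>\<N>\<close> of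
  \<open>Q\<^sub>P(X,Y)\<close> induces the family of sets \<open>{z. \<forall>g\<in>N. g z \<in> V}\<close>, \<open>N \<in> \<N>\<close>, which is a network
  of \<open>X\<close>. Indeed, given \<open>x \<in> U\<close> with \<open>U\<close> open, regularity yields an open \<open>W \<ni> x\<close> with
  \<open>cl W \<subseteq> U\<close>. The function equal to \<open>y\<^sub>0\<close> on \<open>cl W\<close> and to \<open>y\<^sub>1\<close> elsewhere is
  quasi-continuous, because every point of \<open>X\<close> lies in the closure of an open set
  (\<open>W\<close> or \<open>X - cl W\<close>) on which the function is constant. Some \<open>N \<in> \<N>\<close> contains this
  function and is contained in the open set \<open>{g. g x \<in> V}\<close>; the induced set then
  contains \<open>x\<close> and lies inside \<open>cl W \<subseteq> U\<close>.
\<close>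

lemma quasi_continuous_at_if_constant_on_open:
  assumes "openin X G" and "z \<in> X closure_of G" and "\<forall>u\<in>G. f u = f z"
  shows "quasi_continuous_at X Y f z"
  unfolding quasi_continuous_at_def
proof (intro allI impI)
  fix U V
  assume UV: "openin X U \<and> z \<in> U \<and> openin Y V \<and> f z \<in> V"
  then have "U \<inter> G \<noteq> {}"
    using assms(2) by (auto simp: in_closure_of)
  with UV assms(1,3) show "\<exists>G'. openin X G' \<and> G' \<noteq> {} \<and> G' \<subseteq> U \<and> f ` G' \<subseteq> V"
    by (intro exI[of _ "U \<inter> G"]) auto
qed

lemma quasi_continuous_two_valued_closure_of:
  assumes "openin X W" and "y\<^sub>0 \<in> topspace Y" and "y\<^sub>1 \<in> topspace Y"
    and f: "\<And>z. z \<in> topspace X \<Longrightarrow> f z = (if z \<in> X closure_of W then y\<^sub>0 else y\<^sub>1)"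
  shows "quasi_continuous X Y f"
  unfolding quasi_continuous_def
proof (intro conjI ballI)
  show "f ` topspace X \<subseteq> topspace Y"
    using assms(2,3) f by auto
next
  fix z
  assume z: "z \<in> topspace X"
  show "quasi_continuous_at X Y f z"
  proof (cases "z \<in> X closure_of W")
    case True
    have "W \<subseteq> X closure_of W" and "W \<subseteq> topspace X"
      by (simp_all add: assms(1) closure_of_subset openin_subset)
    then have "\<forall>u\<in>W. f u = f z"
      using True z by (auto simp: f subset_eq)
    with True show ?thesis
      by (rule quasi_continuous_at_if_constant_on_open[OF assms(1)])
  next
    case False
    have "z \<in> X closure_of (topspace X - X closure_of W)"
      using z False closure_of_subset[of "topspace X - X closure_of W"] by blast
    with False z show ?thesis
      by (intro quasi_continuous_at_if_constant_on_open[of X "topspace X - X closure_of W"])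
        (use f in auto)
  qed
qed

lemma topspace_QP:
  "topspace (QP X Y) = {f \<in> extensional (topspace X). quasi_continuous X Y f}"
  unfolding QP_def quasi_continuous_def by (auto simp: PiE_iff extensional_def)

lemma continuous_map_QP_evaluation:
  assumes "x \<in> topspace X"
  shows "continuous_map (QP X Y) Y (\<lambda>g. g x)"
  unfolding QP_def
  by (rule continuous_map_from_subtopology) (rule continuous_map_product_projection[OF assms])

lemma regular_space_closure_of_subset_open:
  assumes "regular_space X" and "openin X U" and "x \<in> U"
  obtains W where "openin X W" "x \<in> W" "X closure_of W \<subseteq> U"
proof -
  have "closedin X (topspace X - U)" and "x \<in> topspace X - (topspace X - U)"
    using assms(2,3) openin_subset by auto
  then obtain W where "openin X W" "x \<in> W" "disjnt (topspace X - U) (X closure_of W)"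
    using assms(1) unfolding regular_space by blast
  moreover have "X closure_of W \<subseteq> topspace X"
    by (rule closure_of_subset_topspace)
  ultimately have "X closure_of W \<subseteq> U"
    by (auto simp: disjnt_def)
  with \<open>openin X W\<close> \<open>x \<in> W\<close> show thesis
    by (rule that)
qed

definition joint_preimage :: "'a topology \<Rightarrow> 'b set \<Rightarrow> ('a \<Rightarrow> 'b) set \<Rightarrow> 'a set" where
  "joint_preimage X V N = {z \<in> topspace X. \<forall>g\<in>N. g z \<in> V}"

lemma network_joint_preimage_QP:
  assumes "regular_space X" and "network (QP X Y) \<N>"
    and "openin Y V" and "y\<^sub>0 \<in> V" and "y\<^sub>1 \<in> topspace Y - V"
  shows "network X (joint_preimage X V ` \<N>)"
  unfolding network_def
proof (intro conjI allI impI)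
  show "joint_preimage X V ` \<N> \<subseteq> Pow (topspace X)"
    by (auto simp: joint_preimage_def)
next
  fix x U
  assume "openin X U \<and> x \<in> U"
  then have x: "x \<in> topspace X" and "openin X U" "x \<in> U"
    using openin_subset by auto
  then obtain W where W: "openin X W" "x \<in> W" "X closure_of W \<subseteq> U"
    using assms(1) regular_space_closure_of_subset_open by metis
  define f where "f = restrict (\<lambda>z. if z \<in> X closure_of W then y\<^sub>0 else y\<^sub>1) (topspace X)"
  have "y\<^sub>0 \<in> topspace Y"
    using assms(3,4) openin_subset by blast
  then have "f \<in> topspace (QP X Y)"
    unfolding topspace_QP f_def
    using W(1) assms(5) by (auto intro: quasi_continuous_two_valued_closure_of)
  moreover have "x \<in> X closure_of W"
    using W(1,2) closure_of_subset[OF openin_subset[OF W(1)]] by blast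
  then have "f x \<in> V"
    using x assms(4) by (simp add: f_def)
  moreover have "openin (QP X Y) {g \<in> topspace (QP X Y). g x \<in> V}"
    by (rule openin_continuous_map_preimage[OF continuous_map_QP_evaluation[OF x] assms(3)])
  ultimately obtain N where N: "N \<in> \<N>" "f \<in> N" "N \<subseteq> {g \<in> topspace (QP X Y). g x \<in> V}"
    using assms(2) unfolding network_def by blast
  have "x \<in> joint_preimage X V N"
    using N(3) x by (auto simp: joint_preimage_def)
  moreover have "joint_preimage X V N \<subseteq> X closure_of W"
    using N(2) assms(5) by (auto simp: joint_preimage_def f_def split: if_splits)
  ultimately show "\<exists>M\<in>joint_preimage X V ` \<N>. x \<in> M \<and> M \<subseteq> U"
    using N(1) W(3) by blast
qed

theorem mainTheorem7:
  fixes X :: "'a topology" and Y :: "'b topology"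
  assumes "regular_space X"
    and "\<exists>V. openin Y V \<and> V \<noteq> {} \<and> V \<noteq> topspace Y"
  shows "\<forall>\<N>. network (QP X Y) \<N> \<longrightarrow>
           (\<exists>\<M>. network X \<M> \<and> (\<M> \<lesssim> \<N> \<or> countable \<M>))"
proof (intro allI impI)
  fix \<N>
  assume "network (QP X Y) \<N>"
  obtain V where V: "openin Y V" "V \<noteq> {}" "V \<noteq> topspace Y"
    using assms(2) by blast
  then obtain y\<^sub>0 y\<^sub>1 where "y\<^sub>0 \<in> V" "y\<^sub>1 \<in> topspace Y - V"
    using openin_subset by blast
  then have "network X (joint_preimage X V ` \<N>)"
    by (intro network_joint_preimage_QP[OF assms(1) \<open>network (QP X Y) \<N>\<close> V(1)])
  then show "\<exists>\<M>. network X \<M> \<and> (\<M> \<lesssim> \<N> \<or> countable \<M>)"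
    using image_lepoll by blast
qed

end
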